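(* Let $\alpha\ge0$ and let $b_1,b_2\in C[0,1]$ satisfy $b_1(x)\ge b_2(x)>1$ on $[0,1]$. For $i=1,2$ let $(n_i,E_i)$ be the interior subsonic solution of $\big(1-\frac{1}{n^2}\big)n_x=nE-\alpha$, $E_x=n-b_i(x)$ on $(0,1)$, $n(0)=n(1)=1$. Then $n_1(x)\ge n_2(x)$ for all $x\in[0,1]$.
   Context: For a doping profile $b\in C[0,1]$ with $\inf_{[0,1]}b>1$ and $\alpha\ge0$, a pair $(n,E)$ is an interior subsonic solution if: $(n-1)^2\in H_0^1(0,1)$; $n>1$ on $(0,1)$; $n(0)=n(1)=1$; for every $\varphi\in H_0^1(0,1)$, $\int_0^1\big(\frac1n-\frac1{n^3}\big)n_x\varphi_x\,dx+\alpha\int_0^1\frac{\varphi_x}{n}\,dx+\int_0^1(n-b)\varphi\,dx=0$; and $E(x)=\alpha+\int_0^x(n-b)\,dy$. Such a solution is known to exist and be unique. *)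

theory Defs
  imports "HOL-Analysis.Analysis"
begin

text \<open>Membership in H_0^1(0,1), in its one-dimensional (absolutely continuous
  representative) form: u is the indefinite integral on [0,1] of a square-integrable
  function g (its weak derivative), and u vanishes at both endpoints.\<close>
definition H01_with_deriv :: "(real \<Rightarrow> real) \<Rightarrow> (real \<Rightarrow> real) \<Rightarrow> bool" where
  "H01_with_deriv u g \<longleftrightarrow>
     g \<in> borel_measurable (lebesgue_on {0..1}) \<and>
     integrable (lebesgue_on {0..1}) (\<lambda>x. (g x)\<^sup>2) \<and>
     (\<forall>x\<in>{0..1}. u x = integral\<^sup>L (lebesgue_on {0..x}) g) \<and>
     u 0 = 0 \<and> u 1 = 0"

definition in_H01 :: "(real \<Rightarrow> real) \<Rightarrow> bool" where
  "in_H01 u \<longleftrightarrow> (\<exists>g. H01_with_deriv u g)"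

definition interior_subsonic_solution ::
  "real \<Rightarrow> (real \<Rightarrow> real) \<Rightarrow> (real \<Rightarrow> real) \<Rightarrow> (real \<Rightarrow> real) \<Rightarrow> bool" where
  "interior_subsonic_solution \<alpha> b n E \<longleftrightarrow>
     in_H01 (\<lambda>x. (n x - 1)\<^sup>2) \<and>
     (\<forall>x\<in>{0<..<1}. n x > 1) \<and> n 0 = 1 \<and> n 1 = 1 \<and>
     (\<exists>nx. (\<forall>x y. 0 < x \<and> x \<le> y \<and> y < 1 \<longrightarrow>
               integrable (lebesgue_on {x..y}) nx \<and>
               n y - n x = integral\<^sup>L (lebesgue_on {x..y}) nx) \<and>
           (\<forall>\<phi> \<phi>x. H01_with_deriv \<phi> \<phi>x \<longrightarrow>
               integral\<^sup>L (lebesgue_on {0..1}) (\<lambda>x. (1 / n x - 1 / (n x)^3) * nx x * \<phi>x x)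
             + \<alpha> * integral\<^sup>L (lebesgue_on {0..1}) (\<lambda>x. \<phi>x x / n x)
             + integral\<^sup>L (lebesgue_on {0..1}) (\<lambda>x. (n x - b x) * \<phi> x) = 0)) \<and>
     (\<forall>x\<in>{0..1}. E x = \<alpha> + integral\<^sup>L (lebesgue_on {0..x}) (\<lambda>y. n y - b y))"

end

theory Submission
  imports Defs
begin

text \<open>Write B(m) = ln m + 1/(2 m^2); its derivative 1/m - 1/m^3 is the coefficient of n_x in
  the equation, which therefore says (B(n))' = E - \<alpha>/n. Weakly: testing with differences of
  ramps over windows of equal length shows that the flux B'(n) n_x + \<alpha>/n - (E - \<alpha>) has equal
  integrals over all such windows, hence is a.e. a constant c; solving for n_x, the solution is
  C^1 inside (0,1) with (B(n))' = c - \<alpha>/n + (E - \<alpha>), where E - \<alpha> = integral {0..x} (n - b).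

  Suppose n2 > n1 somewhere and let (p,q) be a maximal interval where this holds. Then
  D = B(n2) - B(n1) is \<le> 0 at p and q and > 0 inside, and D' = G + P with
  G = c2 - c1 + (E2 - E1) and P = \<alpha> (1/n1 - 1/n2). Here G' = (n2 - n1) + (b1 - b2) \<ge> 0 on (p,q),
  P(p) \<le> 0 and P \<ge> 0 on (p,q). As D(p) \<le> 0 < D on (p,q), D'(p) \<ge> 0, so G(p) \<ge> 0; then G \<ge> 0
  on [p,q], hence D' \<ge> 0 on (p,q), and D cannot drop back to a value \<le> 0 at q.\<close>

lemma integrable_lebesgue_on_iff_absolutely_integrable:
  fixes f :: "'a::euclidean_space \<Rightarrow> 'b::{banach, second_countable_topology}"
  assumes "S \<in> sets lebesgue"
  shows "integrable (lebesgue_on S) f \<longleftrightarrow> f absolutely_integrable_on S"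
  using assms by (simp add: set_integrable_def integrable_restrict_space)

lemma absolutely_integrable_imp_lebesgue_on:
  fixes f :: "real \<Rightarrow> real"
  assumes "f absolutely_integrable_on {a..b}"
  shows "integrable (lebesgue_on {a..b}) f"
    and "integral\<^sup>L (lebesgue_on {a..b}) f = integral {a..b} f"
  using assms integrable_lebesgue_on_iff_absolutely_integrable[of "{a..b}" f]
    lebesgue_integral_eq_integral[of "{a..b}" f] by auto

lemma absolutely_integrable_continuous_mult_real:
  fixes f g :: "real \<Rightarrow> real"
  assumes "continuous_on {a..b} f" and "g absolutely_integrable_on {a..b}"
  shows "(\<lambda>x. f x * g x) absolutely_integrable_on {a..b}"
proof (rule absolutely_integrable_bounded_measurable_product_real)
  show "f \<in> borel_measurable (lebesgue_on {a..b})"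
    using assms(1) by (rule continuous_imp_measurable_on_sets_lebesgue) auto
  show "bounded (f ` {a..b})"
    using assms(1) by (intro compact_imp_bounded compact_continuous_image) auto
qed (use assms in auto)

lemma indicator_absolutely_integrable_on:
  fixes s t a b :: real
  shows "indicat_real {s..t} absolutely_integrable_on {a..b}"
  by (simp add: absolutely_integrable_on_iff_nonneg integrable_on_indicator)

lemma has_integral_mult_indicator:
  fixes F :: "real \<Rightarrow> real"
  assumes "F integrable_on {s..t}" "a \<le> s" "t \<le> b"
  shows "((\<lambda>x. F x * indicator {s..t} x) has_integral integral {s..t} F) {a..b}"
proof -
  have "{s..t} \<inter> {a..b} = {s..t}" using assms(2,3) by auto
  with assms(1) have "(F has_integral integral {s..t} F) ({s..t} \<inter> {a..b})"
    by (simp only: integrable_integral)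
  then have "((\<lambda>x. if x \<in> {s..t} then F x else 0) has_integral integral {s..t} F) {a..b}"
    by (simp only: has_integral_restrict_Int)
  moreover have "(\<lambda>x. F x * indicator {s..t} x) = (\<lambda>x. if x \<in> {s..t} then F x else 0)"
    by (auto simp: indicator_def)
  ultimately show ?thesis by simp
qed

definition ramp :: "real \<Rightarrow> real \<Rightarrow> real \<Rightarrow> real" where
  "ramp s h x = max 0 (min (s + h) x - s)"

lemma integral_indicator_eq_ramp:
  assumes "a \<le> s" "a \<le> x"
  shows "integral {a..x} (indicat_real {s..s+h}) = ramp s h x"
proof -
  have "integral {a..x} (indicat_real {s..s+h}) = integral {a..x} (\<lambda>y. if y \<in> {s..s+h} then 1 else 0)"
    by (simp add: indicator_def[abs_def] of_bool_def)
  also have "\<dots> = integral ({s..s+h} \<inter> {a..x}) (\<lambda>_. 1)"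
    by (rule integral_restrict_Int)
  also have "{s..s+h} \<inter> {a..x} = {s..min (s+h) x}" using assms by auto
  finally show ?thesis by (auto simp: ramp_def)
qed

lemma continuous_on_ramp: "continuous_on S (ramp s h)"
  unfolding ramp_def by (intro continuous_intros)

lemma has_real_derivative_ramp:
  assumes "x \<noteq> s" "x \<noteq> s + h"
  shows "(ramp s h has_real_derivative indicator {s..s+h} x) (at x)"
proof -
  consider "x < s" | "s < x" "x < s + h" | "s < x" "s + h < x"
    using assms by linarith
  then show ?thesis
  proof cases
    case 1
    have "(ramp s h has_real_derivative 0) (at x)"
      by (rule has_field_derivative_transform_within_open[OF DERIV_const, where S="{..<s}"])
         (use 1 in \<open>auto simp: ramp_def\<close>)
    with 1 show ?thesis by simp
  next
    case 2
    have "((\<lambda>y. y - s) has_real_derivative 1) (at x)"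
      by (auto intro!: derivative_eq_intros)
    then have "(ramp s h has_real_derivative 1) (at x)"
      by (rule has_field_derivative_transform_within_open[where S="{s<..<s+h}"])
         (use 2 in \<open>auto simp: ramp_def\<close>)
    with 2 show ?thesis by simp
  next
    case 3
    have "(ramp s h has_real_derivative 0) (at x)"
      by (rule has_field_derivative_transform_within_open[OF DERIV_const[of "max 0 h"], where S="{max s (s+h)<..}"])
         (use 3 in \<open>auto simp: ramp_def\<close>)
    with 3 show ?thesis by simp
  qed
qed

lemma has_real_derivative_integral_upper:
  fixes g :: "real \<Rightarrow> real"
  assumes "continuous_on {a..b} g" "a < x" "x < b"
  shows "((\<lambda>u. integral {a..u} g) has_real_derivative g x) (at x)"
  using integral_has_real_derivative[OF assms(1), of x] assms(2,3) by (simp add: at_within_Icc_at)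

lemma integral_mult_ramp:
  fixes g :: "real \<Rightarrow> real"
  assumes g: "continuous_on {a..b} g" and "a \<le> s" "0 \<le> h" "s + h \<le> b"
  shows "integral {a..b} (\<lambda>x. g x * ramp s h x)
           = h * integral {a..b} g - integral {s..s+h} (\<lambda>x. integral {a..x} g)"
proof -
  define \<Phi> where "\<Phi> x = integral {a..x} g" for x
  have \<Phi>_cont: "continuous_on {a..b} \<Phi>"
    unfolding \<Phi>_def by (intro indefinite_integral_continuous_1 integrable_continuous_real g)
  have "\<Phi> integrable_on {s..s+h}"
    by (intro integrable_continuous_real continuous_on_subset[OF \<Phi>_cont]) (use assms in auto)
  then have parts: "((\<lambda>x. \<Phi> x * indicator {s..s+h} x) has_integral
      \<Phi> b * ramp s h b - \<Phi> a * ramp s h a - (h * \<Phi> b - integral {s..s+h} \<Phi>)) {a..b}"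
    by (rule has_integral_eq_rhs[OF has_integral_mult_indicator])
       (use assms in \<open>auto simp: \<Phi>_def ramp_def\<close>)
  have "((\<lambda>x. g x * ramp s h x) has_integral h * \<Phi> b - integral {s..s+h} \<Phi>) {a..b}"
  proof (rule integration_by_parts_interior_strong[where prod="(*)" and s="{s, s+h}" and f=\<Phi>
        and g="ramp s h" and g'="indicator {s..s+h}", OF bounded_bilinear_mult _ _ \<Phi>_cont
        continuous_on_ramp _ _ parts])
    show "(\<Phi> has_vector_derivative g x) (at x)" if "x \<in> {a<..<b} - {s, s+h}" for x
      using has_real_derivative_integral_upper[OF g, of x] that
      by (simp add: \<Phi>_def[abs_def] has_real_derivative_iff_has_vector_derivative)
    show "(ramp s h has_vector_derivative indicator {s..s+h} x) (at x)"
      if "x \<in> {a<..<b} - {s, s+h}" for x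
      using has_real_derivative_ramp[of x s h] that
      by (simp add: has_real_derivative_iff_has_vector_derivative)
  qed (use assms in auto)
  then show ?thesis by (simp add: integral_unique \<Phi>_def[abs_def])
qed

lemma lebesgue_integral_mult_ramp_diff:
  fixes g :: "real \<Rightarrow> real"
  assumes g: "continuous_on {a..b} g" and "a \<le> s" "a \<le> t" "0 \<le> h" "s + h \<le> b" "t + h \<le> b"
  shows "integral\<^sup>L (lebesgue_on {a..b}) (\<lambda>x. g x * (ramp s h x - ramp t h x))
           = integral {t..t+h} (\<lambda>x. integral {a..x} g) - integral {s..s+h} (\<lambda>x. integral {a..x} g)"
proof -
  have "integral\<^sup>L (lebesgue_on {a..b}) (\<lambda>x. g x * (ramp s h x - ramp t h x))
      = integral {a..b} (\<lambda>x. g x * ramp s h x - g x * ramp t h x)"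
    by (simp add: right_diff_distrib absolutely_integrable_imp_lebesgue_on(2)
        absolutely_integrable_continuous_real continuous_intros continuous_on_ramp g)
  also have "\<dots> = integral {a..b} (\<lambda>x. g x * ramp s h x) - integral {a..b} (\<lambda>x. g x * ramp t h x)"
    by (intro integral_diff integrable_continuous_real continuous_intros continuous_on_ramp g)
  also have "\<dots> = integral {t..t+h} (\<lambda>x. integral {a..x} g) - integral {s..s+h} (\<lambda>x. integral {a..x} g)"
    using integral_mult_ramp[OF g, of s h] integral_mult_ramp[OF g, of t h] assms by simp
  finally show ?thesis .
qed

lemma lebesgue_differentiation_right:
  fixes f :: "real \<Rightarrow> real"
  assumes f: "f integrable_on {a..b}"
  obtains N where "negligible N"
    "\<And>x. x \<in> {a<..<b} - N \<Longrightarrow> ((\<lambda>h. integral {x..x+h} f / h) \<longlongrightarrow> f x) (at_right 0)"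
proof -
  define f' where "f' x = (if x \<in> {a..b} then f x else 0)" for x
  have "f' integrable_on cbox c d" for c d :: real
  proof -
    have "f integrable_on {max a c..min b d}"
      by (rule integrable_on_subinterval[OF f]) auto
    moreover have "{a..b} \<inter> cbox c d = {max a c..min b d}" by (auto simp: max_def min_def)
    ultimately show ?thesis unfolding f'_def by (simp only: integrable_restrict_Int)
  qed
  then obtain N where N: "negligible N"
    "\<And>x e. \<lbrakk>x \<notin> N; 0 < e\<rbrakk> \<Longrightarrow>
        \<exists>d>0. \<forall>h. 0 < h \<and> h < d \<longrightarrow>
          norm (integral (cbox x (x + h *\<^sub>R One)) f' /\<^sub>R h ^ DIM(real) - f' x) < e"
    using integrable_ccontinuous_explicit[of f'] by blast
  show ?thesis
  proof (rule that[OF N(1)])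
    fix x assume x: "x \<in> {a<..<b} - N"
    show "((\<lambda>h. integral {x..x+h} f / h) \<longlongrightarrow> f x) (at_right 0)"
      unfolding tendsto_iff
    proof (intro allI impI)
      fix e :: real assume e: "0 < e"
      obtain d where d: "d > 0" "\<And>h. 0 < h \<Longrightarrow> h < d \<Longrightarrow>
          norm (integral (cbox x (x + h *\<^sub>R One)) f' /\<^sub>R h ^ DIM(real) - f' x) < e"
        using N(2)[of x e] x e by blast
      show "\<forall>\<^sub>F h in at_right 0. dist (integral {x..x + h} f / h) (f x) < e"
        unfolding eventually_at_right_field
      proof (intro exI[where x="min d (b - x)"] conjI allI impI)
        show "0 < min d (b - x)" using d x by auto
        fix h :: real assume h: "0 < h" "h < min d (b - x)"
        have "{a..b} \<inter> {x..x+h} = {x..x+h}" using x h by auto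
        then have "integral {x..x+h} f' = integral {x..x+h} f"
          unfolding f'_def integral_restrict_Int by (rule arg_cong)
        moreover have "f' x = f x" using x by (simp add: f'_def)
        ultimately show "dist (integral {x..x + h} f / h) (f x) < e"
          using d(2)[of h] h by (simp add: dist_norm divide_inverse mult.commute)
      qed
    qed
  qed
qed

text \<open>At a Lebesgue point z the right averages of K tend to K z; they coincide with the
  averages at one fixed Lebesgue point x0, so K z = K x0.\<close>
lemma ae_const_if_window_integrals_eq:
  fixes K :: "real \<Rightarrow> real"
  assumes "a < b"
    and K_int: "\<And>x y. a < x \<Longrightarrow> x \<le> y \<Longrightarrow> y < b \<Longrightarrow> K integrable_on {x..y}"
    and K_eq: "\<And>s t h. a < s \<Longrightarrow> a < t \<Longrightarrow> 0 < h \<Longrightarrow> s + h < b \<Longrightarrow> t + h < b \<Longrightarrow>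
                 integral {s..s+h} K = integral {t..t+h} K"
  obtains c where
    "\<And>x y. a < x \<Longrightarrow> x \<le> y \<Longrightarrow> y < b \<Longrightarrow> \<exists>N. negligible N \<and> (\<forall>z\<in>{x..y} - N. K z = c)"
proof -
  define p q where "p = (3 * a + b) / 4" and "q = (a + 3 * b) / 4"
  have pq: "a < p" "p < q" "q < b" using \<open>a < b\<close> by (auto simp: p_def q_def)
  obtain N0 where N0: "negligible N0"
    "\<And>x. x \<in> {p<..<q} - N0 \<Longrightarrow> ((\<lambda>h. integral {x..x+h} K / h) \<longlongrightarrow> K x) (at_right 0)"
    using lebesgue_differentiation_right[OF K_int[OF pq(1) less_imp_le[OF pq(2)] pq(3)]] by auto
  have "\<not> {p<..<q} \<subseteq> N0"
    using negligible_subset[OF N0(1)] negligible_interval(2)[of p q] pq(2) by auto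
  then obtain x0 where x0: "x0 \<in> {p<..<q} - N0" by blast
  show ?thesis
  proof (rule that[of "K x0"])
    fix x y :: real assume xy: "a < x" "x \<le> y" "y < b"
    obtain N where N: "negligible N"
      "\<And>z. z \<in> {x<..<y} - N \<Longrightarrow> ((\<lambda>h. integral {z..z+h} K / h) \<longlongrightarrow> K z) (at_right 0)"
      using lebesgue_differentiation_right[OF K_int[OF xy]] by auto
    have "K z = K x0" if z: "z \<in> {x<..<y} - N" for z
    proof -
      have "\<forall>\<^sub>F h in at_right 0. integral {z..z+h} K / h = integral {x0..x0+h} K / h"
        unfolding eventually_at_right_field
      proof (intro exI[where x="min (b - z) (b - x0)"] conjI allI impI)
        show "0 < min (b - z) (b - x0)" using z xy x0 pq by auto
        fix h :: real assume "0 < h" "h < min (b - z) (b - x0)"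
        then show "integral {z..z+h} K / h = integral {x0..x0+h} K / h"
          using K_eq[of z x0 h] z xy x0 pq by auto
      qed
      with N(2)[OF z] have "((\<lambda>h. integral {x0..x0+h} K / h) \<longlongrightarrow> K z) (at_right 0)"
        by (rule Lim_transform_eventually)
      with N0(2)[OF x0] show "K z = K x0"
        using tendsto_unique[OF trivial_limit_at_right_real] by blast
    qed
    then have "\<forall>z\<in>{x..y} - (N \<union> {x, y}). K z = K x0" by auto
    moreover have "negligible (N \<union> {x, y})" using N(1) by auto
    ultimately show "\<exists>N. negligible N \<and> (\<forall>z\<in>{x..y} - N. K z = K x0)" by blast
  qed
qed

lemma has_real_derivative_if_integral_eq:
  fixes f R :: "real \<Rightarrow> real"
  assumes R: "continuous_on {a<..<b} R"
    and f: "\<And>x y. a < x \<Longrightarrow> x \<le> y \<Longrightarrow> y < b \<Longrightarrow> f y - f x = integral {x..y} R"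
    and x: "a < x" "x < b"
  shows "(f has_real_derivative R x) (at x)"
proof -
  define p q where "p = (a + x) / 2" and "q = (x + b) / 2"
  have pq: "a < p" "p < x" "x < q" "q < b" using x by (auto simp: p_def q_def)
  have "continuous_on {p..q} R" by (rule continuous_on_subset[OF R]) (use pq in auto)
  then have "((\<lambda>u. integral {p..u} R) has_real_derivative R x) (at x)"
    using pq(2,3) by (rule has_real_derivative_integral_upper)
  then have "((\<lambda>u. f p + integral {p..u} R) has_real_derivative R x) (at x)"
    using DERIV_add[OF DERIV_const] by fastforce
  then show ?thesis
  proof (rule has_field_derivative_transform_within_open[where S="{p<..<q}"])
    fix u assume "u \<in> {p<..<q}"
    then show "f p + integral {p..u} R = f u" using f[of p u] pq by auto
  qed (use pq in auto)
qed

lemma H01_with_deriv_continuous: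
  assumes "H01_with_deriv u g"
  shows "continuous_on {0..1} u"
proof -
  from assms have g_meas: "g \<in> borel_measurable (lebesgue_on {0..1})"
    and g_sq: "integrable (lebesgue_on {0..1}) (\<lambda>x. (g x)\<^sup>2)"
    and u: "\<And>x. x \<in> {0..1} \<Longrightarrow> u x = integral\<^sup>L (lebesgue_on {0..x}) g"
    unfolding H01_with_deriv_def by auto
  have "integrable (lebesgue_on {0..1}) g"
    by (rule finite_measure.square_integrable_imp_integrable[OF finite_measure_lebesgue_on g_meas])
       (use g_sq in auto)
  then have g_int: "g absolutely_integrable_on {0..1}"
    by (simp add: integrable_lebesgue_on_iff_absolutely_integrable)
  have "u x = integral {0..x} g" if "x \<in> {0..1}" for x
    using u[OF that] absolutely_integrable_imp_lebesgue_on(2)[OF absolutely_integrable_on_subinterval[OF g_int]]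
      that by auto
  moreover have "continuous_on {0..1} (\<lambda>x. integral {0..x} g)"
    using g_int by (intro indefinite_integral_continuous_1 set_lebesgue_integral_eq_integral(1))
  ultimately show ?thesis
    using continuous_on_eq by force
qed

lemma H01_with_deriv_ramp_diff:
  assumes "0 \<le> s" "0 \<le> t" "0 \<le> h" "s + h \<le> 1" "t + h \<le> 1"
  shows "H01_with_deriv (\<lambda>x. ramp s h x - ramp t h x)
           (\<lambda>x. indicator {s..s+h} x - indicator {t..t+h} x)"
  unfolding H01_with_deriv_def
proof (intro conjI ballI)
  let ?\<phi>' = "\<lambda>x. indicator {s..s+h} x - indicator {t..t+h} x :: real"
  have \<phi>'_int: "?\<phi>' absolutely_integrable_on {a..c}" for a c
    by (intro set_integral_diff(1) indicator_absolutely_integrable_on)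
  show "?\<phi>' \<in> borel_measurable (lebesgue_on {0..1})"
    using absolutely_integrable_imp_lebesgue_on(1)[OF \<phi>'_int] by (rule borel_measurable_integrable)
  have "bounded (?\<phi>' ` {0..1})"
    unfolding bounded_iff by (rule exI[where x=2]) (auto simp: indicator_def)
  then have "(\<lambda>x. ?\<phi>' x * ?\<phi>' x) absolutely_integrable_on {0..1}"
    using absolutely_integrable_bounded_measurable_product_real[OF _ _ _ \<phi>'_int]
      absolutely_integrable_imp_lebesgue_on(1)[OF \<phi>'_int] borel_measurable_integrable by auto
  then show "integrable (lebesgue_on {0..1}) (\<lambda>x. (?\<phi>' x)\<^sup>2)"
    by (simp add: absolutely_integrable_imp_lebesgue_on(1) power2_eq_square)
  fix x :: real assume "x \<in> {0..1}"
  then have "integral {0..x} ?\<phi>' = ramp s h x - ramp t h x"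
    using assms
    by (subst integral_diff) (auto simp: integral_indicator_eq_ramp integrable_on_indicator)
  then show "ramp s h x - ramp t h x = integral\<^sup>L (lebesgue_on {0..x}) ?\<phi>'"
    by (simp add: absolutely_integrable_imp_lebesgue_on(2)[OF \<phi>'_int])
qed (use assms in \<open>auto simp: ramp_def\<close>)

lemma lebesgue_integral_mult_indicator_diff:
  fixes F :: "real \<Rightarrow> real"
  assumes "F absolutely_integrable_on {s..s+h}" "F absolutely_integrable_on {t..t+h}"
    and "a \<le> s" "s + h \<le> b" "a \<le> t" "t + h \<le> b"
  shows "integral\<^sup>L (lebesgue_on {a..b}) (\<lambda>x. F x * (indicator {s..s+h} x - indicator {t..t+h} x))
           = integral {s..s+h} F - integral {t..t+h} F"
proof -
  have restrict: "(\<lambda>x. F x * indicator {p..q} x) absolutely_integrable_on {a..b}"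
    if "F absolutely_integrable_on {p..q}" for p q
  proof -
    have "(\<lambda>x. if x \<in> {p..q} then F x else 0) absolutely_integrable_on UNIV"
      using that absolutely_integrable_restrict_UNIV by blast
    moreover have "(\<lambda>x. F x * indicator {p..q} x) = (\<lambda>x. if x \<in> {p..q} then F x else 0)"
      by (auto simp: indicator_def)
    ultimately show ?thesis
      using absolutely_integrable_on_subinterval[where S=UNIV and a=a and b=b] by auto
  qed
  have split: "(\<lambda>x. F x * (indicator {s..s+h} x - indicator {t..t+h} x))
      = (\<lambda>x. F x * indicator {s..s+h} x - F x * indicator {t..t+h} x)"
    by (simp add: algebra_simps)
  have "integral\<^sup>L (lebesgue_on {a..b}) (\<lambda>x. F x * indicator {s..s+h} x - F x * indicator {t..t+h} x)
      = integral {a..b} (\<lambda>x. F x * indicator {s..s+h} x - F x * indicator {t..t+h} x)"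
    by (intro absolutely_integrable_imp_lebesgue_on(2) set_integral_diff(1) restrict assms(1,2))
  also have "\<dots> = integral {s..s+h} F - integral {t..t+h} F"
    by (intro integral_unique has_integral_diff has_integral_mult_indicator
        set_lebesgue_integral_eq_integral(1) assms)
  finally show ?thesis unfolding split .
qed

section \<open>The Bernoulli function\<close>

definition bernoulli_fun :: "real \<Rightarrow> real" where
  "bernoulli_fun m = ln m + 1 / (2 * m\<^sup>2)"

definition bernoulli_deriv :: "real \<Rightarrow> real" where
  "bernoulli_deriv m = 1 / m - 1 / m ^ 3"

lemma bernoulli_fun_has_real_derivative:
  assumes "0 < m"
  shows "(bernoulli_fun has_real_derivative bernoulli_deriv m) (at m)"
proof -
  have "((\<lambda>m. ln m + 1 / (2 * m\<^sup>2)) has_real_derivative 1 / m - 2 * (2 * m) / (2 * m\<^sup>2)\<^sup>2) (at m)"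
    using assms by (auto intro!: derivative_eq_intros)
  moreover have "1 / m - 2 * (2 * m) / (2 * m\<^sup>2)\<^sup>2 = bernoulli_deriv m"
    using assms by (simp add: bernoulli_deriv_def field_simps power2_eq_square power3_eq_cube)
  ultimately show ?thesis by (simp add: bernoulli_fun_def[abs_def])
qed

lemma bernoulli_deriv_pos:
  assumes "1 < m"
  shows "0 < bernoulli_deriv m"
proof -
  have "m * 1 < m * m\<^sup>2"
    using assms by (intro mult_strict_left_mono) (auto simp: power2_eq_square less_1_mult)
  then have "1 / m ^ 3 < 1 / m"
    using assms by (intro divide_strict_left_mono) (auto simp: power3_eq_cube power2_eq_square)
  then show ?thesis by (simp add: bernoulli_deriv_def)
qed

lemma continuous_on_bernoulli_fun [continuous_intros]:
  assumes "continuous_on S f" "\<And>x. x \<in> S \<Longrightarrow> 0 < f x"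
  shows "continuous_on S (\<lambda>x. bernoulli_fun (f x))"
proof -
  have "f x \<noteq> 0" if "x \<in> S" for x using assms(2)[OF that] by simp
  then show ?thesis unfolding bernoulli_fun_def using assms by (intro continuous_intros) auto
qed

lemma bernoulli_fun_strict_mono:
  assumes "1 \<le> p" "p < q"
  shows "bernoulli_fun p < bernoulli_fun q"
proof (rule DERIV_pos_imp_increasing_open[OF assms(2)])
  show "continuous_on {p..q} bernoulli_fun"
    using continuous_on_bernoulli_fun[OF continuous_on_id, of "{p..q}"] assms by auto
  fix x assume "p < x" "x < q"
  then have "1 < x" using assms by simp
  then show "\<exists>y. (bernoulli_fun has_real_derivative y) (at x) \<and> 0 < y"
    using bernoulli_fun_has_real_derivative[of x] bernoulli_deriv_pos[of x] by auto
qed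

lemma bernoulli_fun_mono:
  assumes "1 \<le> p" "p \<le> q"
  shows "bernoulli_fun p \<le> bernoulli_fun q"
  using bernoulli_fun_strict_mono[of p q] assms by (cases "p = q") auto

section \<open>Regularity of weak subsonic solutions\<close>

locale weak_subsonic_solution =
  fixes \<alpha> :: real and b n nx :: "real \<Rightarrow> real"
  assumes continuous_b: "continuous_on {0..1} b"
    and H01_n: "in_H01 (\<lambda>x. (n x - 1)\<^sup>2)"
    and n_gt_1: "\<And>x. 0 < x \<Longrightarrow> x < 1 \<Longrightarrow> 1 < n x"
    and n_0: "n 0 = 1" and n_1: "n 1 = 1"
    and n_integral_nx: "\<And>x y. 0 < x \<Longrightarrow> x \<le> y \<Longrightarrow> y < 1 \<Longrightarrow>
          integrable (lebesgue_on {x..y}) nx \<and> n y - n x = integral\<^sup>L (lebesgue_on {x..y}) nx"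
    and weak_equation: "\<And>\<phi> \<phi>x. H01_with_deriv \<phi> \<phi>x \<Longrightarrow>
          integral\<^sup>L (lebesgue_on {0..1}) (\<lambda>x. (1 / n x - 1 / (n x)^3) * nx x * \<phi>x x)
        + \<alpha> * integral\<^sup>L (lebesgue_on {0..1}) (\<lambda>x. \<phi>x x / n x)
        + integral\<^sup>L (lebesgue_on {0..1}) (\<lambda>x. (n x - b x) * \<phi> x) = 0"

lemma interior_subsonic_solution_weak:
  assumes "continuous_on {0..1} b" and "interior_subsonic_solution \<alpha> b n E"
  obtains nx where "weak_subsonic_solution \<alpha> b n nx"
proof -
  from assms(2) obtain nx where
    "\<forall>x y. 0 < x \<and> x \<le> y \<and> y < 1 \<longrightarrow>
       integrable (lebesgue_on {x..y}) nx \<and> n y - n x = integral\<^sup>L (lebesgue_on {x..y}) nx"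
    and "\<forall>\<phi> \<phi>x. H01_with_deriv \<phi> \<phi>x \<longrightarrow>
          integral\<^sup>L (lebesgue_on {0..1}) (\<lambda>x. (1 / n x - 1 / (n x)^3) * nx x * \<phi>x x)
        + \<alpha> * integral\<^sup>L (lebesgue_on {0..1}) (\<lambda>x. \<phi>x x / n x)
        + integral\<^sup>L (lebesgue_on {0..1}) (\<lambda>x. (n x - b x) * \<phi> x) = 0"
    unfolding interior_subsonic_solution_def by blast
  moreover have "in_H01 (\<lambda>x. (n x - 1)\<^sup>2)" "\<forall>x\<in>{0<..<1}. 1 < n x" "n 0 = 1" "n 1 = 1"
    using assms(2) unfolding interior_subsonic_solution_def by auto
  ultimately show ?thesis
    by (intro that[of nx], unfold_locales) (use assms(1) in auto)
qed

context weak_subsonic_solution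
begin

lemma n_ge_1: "x \<in> {0..1} \<Longrightarrow> 1 \<le> n x"
  using n_gt_1[of x] n_0 n_1 by (cases "x = 0 \<or> x = 1") auto

lemma continuous_n: "continuous_on {0..1} n"
proof -
  from H01_n obtain g where "H01_with_deriv (\<lambda>x. (n x - 1)\<^sup>2) g" unfolding in_H01_def ..
  then have "continuous_on {0..1} (\<lambda>x. 1 + sqrt ((n x - 1)\<^sup>2))"
    by (intro continuous_intros H01_with_deriv_continuous)
  moreover have "1 + sqrt ((n x - 1)\<^sup>2) = n x" if "x \<in> {0..1}" for x
    using n_ge_1[OF that] by simp
  ultimately show ?thesis using continuous_on_eq by force
qed

lemma continuous_on_inverse_n: "continuous_on {0..1} (\<lambda>x. 1 / n x)"
  using n_ge_1 by (intro continuous_intros continuous_n) fastforce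

lemma continuous_on_bernoulli_deriv_n: "continuous_on {0..1} (\<lambda>x. bernoulli_deriv (n x))"
proof -
  have "n x \<noteq> 0" if "x \<in> {0..1}" for x using n_ge_1[OF that] by simp
  then show ?thesis
    unfolding bernoulli_deriv_def by (intro continuous_intros continuous_n) auto
qed

lemma continuous_on_integral_n_minus_b: "continuous_on {0..1} (\<lambda>x. integral {0..x} (\<lambda>y. n y - b y))"
  by (intro indefinite_integral_continuous_1 integrable_continuous_real continuous_intros
      continuous_n continuous_b)

lemma has_real_derivative_integral_n_minus_b:
  "0 < x \<Longrightarrow> x < 1 \<Longrightarrow>
    ((\<lambda>x. integral {0..x} (\<lambda>y. n y - b y)) has_real_derivative n x - b x) (at x)"
  by (intro has_real_derivative_integral_upper[of 0 1] continuous_intros continuous_n continuous_b)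

lemma bernoulli_deriv_n_nx_absolutely_integrable:
  assumes "0 < x" "x \<le> y" "y < 1"
  shows "(\<lambda>z. bernoulli_deriv (n z) * nx z) absolutely_integrable_on {x..y}"
proof (rule absolutely_integrable_continuous_mult_real)
  show "continuous_on {x..y} (\<lambda>z. bernoulli_deriv (n z))"
    by (rule continuous_on_subset[OF continuous_on_bernoulli_deriv_n]) (use assms in auto)
  show "nx absolutely_integrable_on {x..y}"
    using n_integral_nx[OF assms] by (simp add: integrable_lebesgue_on_iff_absolutely_integrable)
qed

definition flux :: "real \<Rightarrow> real" where
  "flux x = bernoulli_deriv (n x) * nx x + \<alpha> / n x - integral {0..x} (\<lambda>y. n y - b y)"

lemma has_integral_flux:
  assumes "0 < s" "s \<le> t" "t < 1"
  shows "(flux has_integral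
           integral {s..t} (\<lambda>x. bernoulli_deriv (n x) * nx x) + \<alpha> * integral {s..t} (\<lambda>x. 1 / n x)
           - integral {s..t} (\<lambda>x. integral {0..x} (\<lambda>y. n y - b y))) {s..t}"
proof -
  have sub: "{s..t} \<subseteq> {0..1}" using assms by auto
  have "(\<lambda>x. bernoulli_deriv (n x) * nx x) integrable_on {s..t}"
    using bernoulli_deriv_n_nx_absolutely_integrable[OF assms] set_lebesgue_integral_eq_integral(1) by blast
  moreover have "(\<lambda>x. 1 / n x) integrable_on {s..t}"
    by (intro integrable_continuous_real continuous_on_subset[OF continuous_on_inverse_n sub])
  moreover have "(\<lambda>x. integral {0..x} (\<lambda>y. n y - b y)) integrable_on {s..t}"
    by (intro integrable_continuous_real continuous_on_subset[OF continuous_on_integral_n_minus_b sub])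
  ultimately show ?thesis
    unfolding flux_def[abs_def]
    by (auto intro!: has_integral_diff has_integral_add has_integral_mult_right simp: divide_inverse)
qed

text \<open>Test the weak equation with the difference of the ramps of two windows of equal length:
  it vanishes at both ends.\<close>
lemma flux_window_integrals_eq:
  assumes st: "0 < s" "0 < t" "0 < h" "s + h < 1" "t + h < 1"
  shows "integral {s..s+h} flux = integral {t..t+h} flux"
proof -
  define \<psi> :: "real \<Rightarrow> real" where "\<psi> x = indicator {s..s+h} x - indicator {t..t+h} x" for x
  define \<Phi> where "\<Phi> x = integral {0..x} (\<lambda>y. n y - b y)" for x
  define W where "W F = integral {s..s+h} F - integral {t..t+h} F" for F :: "real \<Rightarrow> real"
  have n_minus_b: "continuous_on {0..1} (\<lambda>x. n x - b x)"
    by (intro continuous_intros continuous_n continuous_b)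
  have weak: "integral\<^sup>L (lebesgue_on {0..1}) (\<lambda>x. (1 / n x - 1 / (n x)^3) * nx x * \<psi> x)
      + \<alpha> * integral\<^sup>L (lebesgue_on {0..1}) (\<lambda>x. \<psi> x / n x)
      + integral\<^sup>L (lebesgue_on {0..1}) (\<lambda>x. (n x - b x) * (ramp s h x - ramp t h x)) = 0"
    using weak_equation[OF H01_with_deriv_ramp_diff[of s t h]] st unfolding \<psi>_def by auto
  have I1: "integral\<^sup>L (lebesgue_on {0..1}) (\<lambda>x. (1 / n x - 1 / (n x)^3) * nx x * \<psi> x)
      = W (\<lambda>x. bernoulli_deriv (n x) * nx x)"
    unfolding \<psi>_def W_def bernoulli_deriv_def
    by (rule lebesgue_integral_mult_indicator_diff)
       (use st bernoulli_deriv_n_nx_absolutely_integrable[unfolded bernoulli_deriv_def] in auto)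
  have "integral\<^sup>L (lebesgue_on {0..1}) (\<lambda>x. 1 / n x * \<psi> x) = W (\<lambda>x. 1 / n x)"
    unfolding \<psi>_def W_def
    by (rule lebesgue_integral_mult_indicator_diff)
       (use st in \<open>auto intro!: absolutely_integrable_continuous_real
          continuous_on_subset[OF continuous_on_inverse_n]\<close>)
  then have I2: "integral\<^sup>L (lebesgue_on {0..1}) (\<lambda>x. \<psi> x / n x) = W (\<lambda>x. 1 / n x)"
    by simp
  have I3: "integral\<^sup>L (lebesgue_on {0..1}) (\<lambda>x. (n x - b x) * (ramp s h x - ramp t h x))
      = - W \<Phi>"
    using lebesgue_integral_mult_ramp_diff[OF n_minus_b, of s t h] st by (simp add: W_def \<Phi>_def[abs_def])
  have window: "integral {u..u+h} flux = integral {u..u+h} (\<lambda>x. bernoulli_deriv (n x) * nx x)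
      + \<alpha> * integral {u..u+h} (\<lambda>x. 1 / n x) - integral {u..u+h} \<Phi>"
    if "0 < u" "u + h < 1" for u
    using has_integral_flux[of u "u + h"] that st by (simp add: integral_unique \<Phi>_def[abs_def])
  show ?thesis
    using weak window[of s] window[of t] st unfolding I1 I2 I3 W_def by (simp add: algebra_simps)
qed

lemma flux_ae_const:
  obtains c where "\<And>x y. 0 < x \<Longrightarrow> x \<le> y \<Longrightarrow> y < 1 \<Longrightarrow>
    \<exists>N. negligible N \<and> (\<forall>z\<in>{x..y} - N. flux z = c)"
proof (rule ae_const_if_window_integrals_eq[of 0 1 flux])
  show "flux integrable_on {x..y}" if "0 < x" "x \<le> y" "y < 1" for x y
    using has_integral_flux[OF that] by (rule has_integral_integrable)
next
  show "integral {s..s+h} flux = integral {t..t+h} flux"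
    if "0 < s" "0 < t" "0 < h" "s + h < 1" "t + h < 1" for s t h
    using that by (rule flux_window_integrals_eq)
qed auto

text \<open>Solving flux = c for n_x gives a function R, continuous on (0,1), that agrees with n_x
  almost everywhere; so n is a primitive of R.\<close>
lemma n_has_real_derivative_if_flux_ae_const:
  assumes c: "\<And>x y. 0 < x \<Longrightarrow> x \<le> y \<Longrightarrow> y < 1 \<Longrightarrow>
      \<exists>N. negligible N \<and> (\<forall>z\<in>{x..y} - N. flux z = c)"
    and x: "0 < x" "x < 1"
  shows "(n has_real_derivative
           (c - \<alpha> / n x + integral {0..x} (\<lambda>y. n y - b y)) / bernoulli_deriv (n x)) (at x)"
proof -
  define \<Phi> where "\<Phi> x = integral {0..x} (\<lambda>y. n y - b y)" for x
  define R where "R x = (c - \<alpha> / n x + \<Phi> x) / bernoulli_deriv (n x)" for x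
  have deriv_pos: "0 < bernoulli_deriv (n x)" if "0 < x" "x < 1" for x
    using bernoulli_deriv_pos[OF n_gt_1[OF that]] .
  have sub: "{0<..<1} \<subseteq> {0..1::real}" by auto
  have "continuous_on {0<..<1} (\<lambda>x. c - \<alpha> * (1 / n x) + \<Phi> x)"
    using continuous_on_subset[OF continuous_on_integral_n_minus_b sub] unfolding \<Phi>_def[abs_def]
    by (intro continuous_on_add continuous_on_diff continuous_on_const
        continuous_on_mult_left continuous_on_subset[OF continuous_on_inverse_n sub])
  then have "continuous_on {0<..<1} (\<lambda>x. (c - \<alpha> * (1 / n x) + \<Phi> x) / bernoulli_deriv (n x))"
    using deriv_pos
    by (intro continuous_on_divide continuous_on_subset[OF continuous_on_bernoulli_deriv_n sub])
       (auto simp: less_imp_neq[symmetric])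
  then have R_cont: "continuous_on {0<..<1} R" by (simp add: R_def)
  have "n y - n x = integral {x..y} R" if xy: "0 < x" "x \<le> y" "y < 1" for x y
  proof -
    obtain N where N: "negligible N" "\<forall>z\<in>{x..y} - N. flux z = c" using c[OF xy] by blast
    have "n y - n x = integral {x..y} nx"
      using n_integral_nx[OF xy]
      by (simp add: absolutely_integrable_imp_lebesgue_on(2) integrable_lebesgue_on_iff_absolutely_integrable)
    also have "\<dots> = integral {x..y} R"
    proof (rule integral_spike[OF N(1)])
      fix z assume z: "z \<in> {x..y} - N"
      then have "bernoulli_deriv (n z) * nx z + \<alpha> / n z - \<Phi> z = c" and "0 < bernoulli_deriv (n z)"
        using N(2) xy deriv_pos[of z] by (auto simp: flux_def \<Phi>_def)
      then show "R z = nx z" by (simp add: R_def field_simps)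
    qed
    finally show ?thesis .
  qed
  with R_cont x have "(n has_real_derivative R x) (at x)"
    by (intro has_real_derivative_if_integral_eq)
  then show ?thesis by (simp add: R_def \<Phi>_def)
qed

lemma bernoulli_n_has_real_derivative:
  obtains c where "\<And>x. 0 < x \<Longrightarrow> x < 1 \<Longrightarrow>
    ((\<lambda>x. bernoulli_fun (n x)) has_real_derivative c - \<alpha> / n x + integral {0..x} (\<lambda>y. n y - b y)) (at x)"
proof -
  obtain c where c: "\<And>x y. 0 < x \<Longrightarrow> x \<le> y \<Longrightarrow> y < 1 \<Longrightarrow>
      \<exists>N. negligible N \<and> (\<forall>z\<in>{x..y} - N. flux z = c)"
    using flux_ae_const by blast
  show ?thesis
  proof (rule that)
    fix x :: real assume x: "0 < x" "x < 1"
    have pos: "0 < bernoulli_deriv (n x)" using bernoulli_deriv_pos[OF n_gt_1[OF x]] .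
    have "((\<lambda>x. bernoulli_fun (n x)) has_real_derivative bernoulli_deriv (n x) *
        ((c - \<alpha> / n x + integral {0..x} (\<lambda>y. n y - b y)) / bernoulli_deriv (n x))) (at x)"
      using n_gt_1[OF x]
      by (intro DERIV_chain2[OF bernoulli_fun_has_real_derivative]
          n_has_real_derivative_if_flux_ae_const[OF c x]) auto
    with pos show "((\<lambda>x. bernoulli_fun (n x)) has_real_derivative
        c - \<alpha> / n x + integral {0..x} (\<lambda>y. n y - b y)) (at x)"
      by simp
  qed
qed

end

section \<open>Comparison\<close>

lemma positive_excursion:
  fixes w :: "real \<Rightarrow> real"
  assumes w: "continuous_on {a..b} w" and "w a \<le> 0" "w b \<le> 0" and z: "z \<in> {a..b}" "0 < w z"
  obtains p q where "a \<le> p" "p < z" "z < q" "q \<le> b" "w p \<le> 0" "w q \<le> 0"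
    "\<And>x. p < x \<Longrightarrow> x < q \<Longrightarrow> 0 < w x"
proof -
  define L where "L = {a..z} \<inter> w -` {..0}"
  define R where "R = {z..b} \<inter> w -` {..0}"
  have "closed L" "closed R" unfolding L_def R_def
    by (intro continuous_closed_preimage continuous_on_subset[OF w]; use z in auto)+
  moreover have "L \<noteq> {}" "R \<noteq> {}" "bdd_above L" "bdd_below R"
    using assms unfolding L_def R_def by (auto intro: bdd_aboveI[where M=z] bdd_belowI[where m=z])
  ultimately have L: "Sup L \<in> L" and R: "Inf R \<in> R"
    by (auto intro: closed_contains_Sup closed_contains_Inf)
  show ?thesis
  proof (rule that[of "Sup L" "Inf R"])
    show "a \<le> Sup L" "Inf R \<le> b" "w (Sup L) \<le> 0" "w (Inf R) \<le> 0"
      using L R by (auto simp: L_def R_def)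
    show "Sup L < z" "z < Inf R"
      using L R z by (auto simp: L_def R_def order.order_iff_strict)
    fix x assume x: "Sup L < x" "x < Inf R"
    show "0 < w x"
    proof (rule ccontr)
      assume "\<not> 0 < w x"
      then have "x \<in> L \<or> x \<in> R" using x L R by (auto simp: L_def R_def)
      then show False
        using x cSup_upper[OF _ \<open>bdd_above L\<close>] cInf_lower[OF _ \<open>bdd_below R\<close>] by force
    qed
  qed
qed

lemma derivative_nonneg_at_left_endpoint:
  fixes D H :: "real \<Rightarrow> real"
  assumes "p < q" and D: "continuous_on {p..q} D" and H: "continuous_on {p..q} H"
    and D_deriv: "\<And>x. p < x \<Longrightarrow> x < q \<Longrightarrow> (D has_real_derivative H x) (at x)"
    and "D p \<le> 0" and D_pos: "\<And>x. p < x \<Longrightarrow> x < q \<Longrightarrow> 0 < D x"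
  shows "0 \<le> H p"
proof (rule ccontr)
  assume "\<not> 0 \<le> H p"
  moreover have "p \<in> {p..q}" using \<open>p < q\<close> by simp
  ultimately obtain d where "0 < d" "\<forall>x\<in>{p..q}. dist x p < d \<longrightarrow> dist (H x) (H p) < - H p"
    using H unfolding continuous_on_iff by (meson neg_0_less_iff_less not_le)
  then have d: "0 < d" "\<And>x. x \<in> {p..q} \<Longrightarrow> dist x p < d \<Longrightarrow> H x < 0"
    by (auto simp: dist_real_def abs_less_iff)
  define y where "y = min (p + d / 2) ((p + q) / 2)"
  have y: "p < y" "y < q" using d(1) \<open>p < q\<close> by (auto simp: y_def min_def)
  have "D y < D p"
  proof (rule DERIV_neg_imp_decreasing_open[OF y(1)])
    show "continuous_on {p..y} D" by (rule continuous_on_subset[OF D]) (use y in auto)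
    fix x assume "p < x" "x < y"
    then have "H x < 0" "(D has_real_derivative H x) (at x)"
      using d y D_deriv by (auto simp: y_def dist_real_def)
    then show "\<exists>l. (D has_real_derivative l) (at x) \<and> l < 0" by blast
  qed
  with \<open>D p \<le> 0\<close> D_pos[OF y] show False by simp
qed

lemma excursion_not_positive:
  fixes D G P :: "real \<Rightarrow> real"
  assumes "p < q"
    and D: "continuous_on {p..q} D" and G: "continuous_on {p..q} G" and P: "continuous_on {p..q} P"
    and D_deriv: "\<And>x. p < x \<Longrightarrow> x < q \<Longrightarrow> (D has_real_derivative G x + P x) (at x)"
    and G_deriv: "\<And>x. p < x \<Longrightarrow> x < q \<Longrightarrow> \<exists>y. (G has_real_derivative y) (at x) \<and> 0 \<le> y"
    and "P p \<le> 0" and P_nonneg: "\<And>x. p < x \<Longrightarrow> x < q \<Longrightarrow> 0 \<le> P x"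
    and "D p \<le> 0" "D q \<le> 0"
  obtains x where "p < x" "x < q" "D x \<le> 0"
proof (rule ccontr)
  assume "\<not> thesis"
  with that have D_pos: "0 < D x" if "p < x" "x < q" for x
    using that by force
  have "0 \<le> G p + P p"
    using \<open>p < q\<close> D continuous_on_add[OF G P] D_deriv \<open>D p \<le> 0\<close> D_pos
    by (rule derivative_nonneg_at_left_endpoint)
  then have G_nonneg: "0 \<le> G x" if "p \<le> x" "x \<le> q" for x
    using DERIV_nonneg_imp_increasing_open[OF that(1) G_deriv continuous_on_subset[OF G]] that
      \<open>P p \<le> 0\<close> by force
  define m where "m = (p + q) / 2"
  have m: "p < m" "m < q" using \<open>p < q\<close> by (auto simp: m_def)
  have "D m \<le> D q"
  proof (rule DERIV_nonneg_imp_increasing_open[of m q D])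
    fix x assume x: "m < x" "x < q"
    then have "0 \<le> G x + P x" using G_nonneg P_nonneg m by force
    moreover have "(D has_real_derivative G x + P x) (at x)" using D_deriv x m by simp
    ultimately show "\<exists>y. (D has_real_derivative y) (at x) \<and> 0 \<le> y" by blast
  qed (use m continuous_on_subset[OF D] in auto)
  with D_pos[OF m] \<open>D q \<le> 0\<close> show False by simp
qed

lemma bernoulli_comparison_principle:
  fixes \<alpha> c1 c2 :: real and n1 n2 b1 b2 \<Phi>1 \<Phi>2 :: "real \<Rightarrow> real"
  assumes "0 \<le> \<alpha>" and b: "\<And>x. 0 < x \<Longrightarrow> x < 1 \<Longrightarrow> b2 x \<le> b1 x"
    and n: "continuous_on {0..1} n1" "continuous_on {0..1} n2"
    and n_ge_1: "\<And>x. x \<in> {0..1} \<Longrightarrow> 1 \<le> n1 x" "\<And>x. x \<in> {0..1} \<Longrightarrow> 1 \<le> n2 x"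
    and "n2 0 \<le> n1 0" "n2 1 \<le> n1 1"
    and \<Phi>: "continuous_on {0..1} \<Phi>1" "continuous_on {0..1} \<Phi>2"
    and \<Phi>1: "\<And>x. 0 < x \<Longrightarrow> x < 1 \<Longrightarrow> (\<Phi>1 has_real_derivative n1 x - b1 x) (at x)"
    and \<Phi>2: "\<And>x. 0 < x \<Longrightarrow> x < 1 \<Longrightarrow> (\<Phi>2 has_real_derivative n2 x - b2 x) (at x)"
    and B1: "\<And>x. 0 < x \<Longrightarrow> x < 1 \<Longrightarrow>
               ((\<lambda>x. bernoulli_fun (n1 x)) has_real_derivative c1 - \<alpha> / n1 x + \<Phi>1 x) (at x)"
    and B2: "\<And>x. 0 < x \<Longrightarrow> x < 1 \<Longrightarrow>
               ((\<lambda>x. bernoulli_fun (n2 x)) has_real_derivative c2 - \<alpha> / n2 x + \<Phi>2 x) (at x)"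
    and "z \<in> {0..1}"
  shows "n2 z \<le> n1 z"
proof (rule ccontr)
  assume "\<not> n2 z \<le> n1 z"
  obtain p q where "0 \<le> p" "p < z" "z < q" "q \<le> 1" "n2 p - n1 p \<le> 0" "n2 q - n1 q \<le> 0"
    and excursion: "\<And>x. p < x \<Longrightarrow> x < q \<Longrightarrow> 0 < n2 x - n1 x"
    by (rule positive_excursion[of 0 1 "\<lambda>x. n2 x - n1 x" z])
       (use continuous_on_diff[OF n(2,1)] assms(7,8) \<open>z \<in> {0..1}\<close> \<open>\<not> n2 z \<le> n1 z\<close> in auto)
  then have pq: "0 \<le> p" "p < q" "q \<le> 1" "n2 p \<le> n1 p" "n2 q \<le> n1 q"
    and inside: "\<And>x. p < x \<Longrightarrow> x < q \<Longrightarrow> n1 x < n2 x"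
    by auto
  have sub: "{p..q} \<subseteq> {0..1}" using pq by auto
  define D where "D x = bernoulli_fun (n2 x) - bernoulli_fun (n1 x)" for x
  define G where "G x = c2 - c1 + \<Phi>2 x - \<Phi>1 x" for x
  define P where "P x = \<alpha> * (1 / n1 x - 1 / n2 x)" for x
  have "continuous_on {0..1} D" "continuous_on {0..1} G" "continuous_on {0..1} P"
    unfolding D_def[abs_def] G_def[abs_def] P_def[abs_def]
    using n \<Phi> n_ge_1 by (intro continuous_intros; force)+
  then obtain x where x: "p < x" "x < q" "D x \<le> 0"
  proof (rule excursion_not_positive[OF \<open>p < q\<close> continuous_on_subset[OF _ sub]
        continuous_on_subset[OF _ sub] continuous_on_subset[OF _ sub]])
    fix x assume x: "p < x" "x < q"
    then have "(D has_real_derivative (c2 - \<alpha> / n2 x + \<Phi>2 x) - (c1 - \<alpha> / n1 x + \<Phi>1 x)) (at x)"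
      unfolding D_def[abs_def] using pq by (intro DERIV_diff B1 B2) auto
    then show "(D has_real_derivative G x + P x) (at x)"
      by (simp add: G_def P_def algebra_simps)
    have "(G has_real_derivative 0 + (n2 x - b2 x) - (n1 x - b1 x)) (at x)"
      unfolding G_def[abs_def] using pq x by (intro DERIV_diff DERIV_add DERIV_const \<Phi>1 \<Phi>2) auto
    moreover have "0 \<le> 0 + (n2 x - b2 x) - (n1 x - b1 x)"
      using inside[OF x] b[of x] pq x by auto
    ultimately show "\<exists>y. (G has_real_derivative y) (at x) \<and> 0 \<le> y" by blast
    show "0 \<le> P x"
      using inside[OF x] n_ge_1(1)[of x] pq x \<open>0 \<le> \<alpha>\<close>
      by (auto simp: P_def intro!: mult_nonneg_nonneg divide_left_mono)
  next
    show "P p \<le> 0"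
      using pq n_ge_1(2)[of p] \<open>0 \<le> \<alpha>\<close>
      by (auto simp: P_def intro!: mult_nonneg_nonpos divide_left_mono)
    show "D p \<le> 0" "D q \<le> 0"
      using pq n_ge_1(2)[of p] n_ge_1(2)[of q]
      by (auto simp: D_def intro!: bernoulli_fun_mono)
  qed
  moreover have "bernoulli_fun (n1 x) < bernoulli_fun (n2 x)"
    using bernoulli_fun_strict_mono[OF n_ge_1(1) inside] x pq by auto
  ultimately show False by (simp add: D_def)
qed

theorem lemma3p1:
  fixes \<alpha> :: real and b1 b2 n1 n2 E1 E2 :: "real \<Rightarrow> real"
  assumes "\<alpha> \<ge> 0"
    and "continuous_on {0..1} b1" and "continuous_on {0..1} b2"
    and "\<forall>x\<in>{0..1}. b1 x \<ge> b2 x \<and> b2 x > 1"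
    and "interior_subsonic_solution \<alpha> b1 n1 E1"
    and "interior_subsonic_solution \<alpha> b2 n2 E2"
  shows "\<forall>x\<in>{0..1}. n1 x \<ge> n2 x"
proof
  fix x :: real assume "x \<in> {0..1}"
  obtain nx1 where "weak_subsonic_solution \<alpha> b1 n1 nx1"
    using interior_subsonic_solution_weak[OF assms(2,5)] .
  then interpret s1: weak_subsonic_solution \<alpha> b1 n1 nx1 .
  obtain nx2 where "weak_subsonic_solution \<alpha> b2 n2 nx2"
    using interior_subsonic_solution_weak[OF assms(3,6)] .
  then interpret s2: weak_subsonic_solution \<alpha> b2 n2 nx2 .
  obtain c1 where c1: "\<And>x. 0 < x \<Longrightarrow> x < 1 \<Longrightarrow> ((\<lambda>x. bernoulli_fun (n1 x)) has_real_derivative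
      c1 - \<alpha> / n1 x + integral {0..x} (\<lambda>y. n1 y - b1 y)) (at x)"
    using s1.bernoulli_n_has_real_derivative by blast
  obtain c2 where c2: "\<And>x. 0 < x \<Longrightarrow> x < 1 \<Longrightarrow> ((\<lambda>x. bernoulli_fun (n2 x)) has_real_derivative
      c2 - \<alpha> / n2 x + integral {0..x} (\<lambda>y. n2 y - b2 y)) (at x)"
    using s2.bernoulli_n_has_real_derivative by blast
  show "n2 x \<le> n1 x"
  proof (rule bernoulli_comparison_principle[OF assms(1) _ s1.continuous_n s2.continuous_n
        s1.n_ge_1 s2.n_ge_1 _ _ s1.continuous_on_integral_n_minus_b s2.continuous_on_integral_n_minus_b
        s1.has_real_derivative_integral_n_minus_b s2.has_real_derivative_integral_n_minus_b c1 c2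
        \<open>x \<in> {0..1}\<close>])
    show "\<And>x. 0 < x \<Longrightarrow> x < 1 \<Longrightarrow> b2 x \<le> b1 x" using assms(4) by simp
  qed (simp_all add: s1.n_0 s1.n_1 s2.n_0 s2.n_1)
qed

end
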